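(* Let $\mathcal L$ be a planar graph embedded in the plane such that: (i) the bounded faces of $\mathcal L$ are $2$-colorable with colors gray and white; (ii) all gray faces of $\mathcal L$ are triangles; (iii) every edge of $\mathcal L$ belongs to precisely one gray triangle; (iv) exactly one angle (corner) of each gray triangle is marked; and (v) each vertex of $\mathcal L$ is incident to at most two unmarked angles of gray triangles. Then $\operatorname{col}_{ve}(\mathcal L) \le 4$.
   Context: The vertex-edge marking game on a graph $G=(V,E)$ (finite or infinite) is played by Alice, who marks vertices, and Bob, who marks edges. Initially nothing is marked. The game proceeds in rounds $r=1,2,\dots$; in each round Alice first marks one unmarked vertex, then Bob marks one unmarked edge. For a finite graph the game ends when either player has no move; for an infinite graph it continues forever. After round $r$, the vertex score of $v$ is $0$ if $v$ is marked, and otherwise the number of marked edges incident to $v$. The $r$-round score is the supremum over $v\in V$ of the vertex scores after round $r$, and the final score of the game is the supremum of the $r$-round scores over all rounds. Bob has a winning strategy for score $s$ if, whatever Alice plays, Bob can force the final score to be at least $s$. The vertex-edge coloring number is $\operatorname{col}_{ve}(G)=\sup\{s : \text{Bob has a winning strategy for score } s\}+1$. An angle of a gray triangle is one of its three corners, i.e. a pair (triangle, vertex of the triangle); a vertex is incident to an angle if it is the vertex of that corner. *)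

theory Defs
  imports "HOL-Analysis.Analysis" "HOL-Library.Extended_Nat"
begin

text \<open>A history of the game is a
  list of moves; moves at even positions are Alice's (vertices), at odd
  positions Bob's (edges).\<close>

datatype 'v move = AMove 'v | BMove "'v set"

definition marked_vertices :: "'v move list \<Rightarrow> 'v set" where
  "marked_vertices h = {v. AMove v \<in> set h}"

definition marked_edges :: "'v move list \<Rightarrow> 'v set set" where
  "marked_edges h = {e. BMove e \<in> set h}"

definition legal_hist :: "'v set \<Rightarrow> 'v set set \<Rightarrow> 'v move list \<Rightarrow> bool" where
  "legal_hist V E h \<longleftrightarrow>
     (\<forall>i < length h.
        (even i \<longrightarrow> (\<exists>v. h ! i = AMove v \<and> v \<in> V \<and> v \<notin> marked_vertices (take i h))) \<and>
        (odd i \<longrightarrow> (\<exists>e. h ! i = BMove e \<and> e \<in> E \<and> e \<notin> marked_edges (take i h))))"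

text \<open>The game has ended: the player to move has no legal move.\<close>
definition terminal :: "'v set \<Rightarrow> 'v set set \<Rightarrow> 'v move list \<Rightarrow> bool" where
  "terminal V E h \<longleftrightarrow>
     (if even (length h) then V \<subseteq> marked_vertices h else E \<subseteq> marked_edges h)"

definition vertex_score :: "'v move list \<Rightarrow> 'v \<Rightarrow> nat" where
  "vertex_score h v =
     (if v \<in> marked_vertices h then 0 else card {e \<in> marked_edges h. v \<in> e})"

text \<open>Score of a position (supremum of vertex scores; it is a bounded set of
  naturals, bounded by the length of the history).\<close>
definition score :: "'v set \<Rightarrow> 'v move list \<Rightarrow> nat" where
  "score V h = (SUP v\<in>V. vertex_score h v)"

definition final_score_fin :: "'v set \<Rightarrow> 'v move list \<Rightarrow> enat" where
  "final_score_fin V h = (SUP n\<in>{..length h}. enat (score V (take n h)))"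

definition final_score_inf :: "'v set \<Rightarrow> (nat \<Rightarrow> 'v move) \<Rightarrow> enat" where
  "final_score_inf V f = (SUP n. enat (score V (map f [0..<n])))"

definition consistent :: "('v move list \<Rightarrow> 'v set) \<Rightarrow> 'v move list \<Rightarrow> bool" where
  "consistent \<sigma> h \<longleftrightarrow> (\<forall>i < length h. odd i \<longrightarrow> h ! i = BMove (\<sigma> (take i h)))"

definition legal_bob_strategy ::
    "'v set \<Rightarrow> 'v set set \<Rightarrow> ('v move list \<Rightarrow> 'v set) \<Rightarrow> bool" where
  "legal_bob_strategy V E \<sigma> \<longleftrightarrow>
     (\<forall>h. legal_hist V E h \<and> consistent \<sigma> h \<and> odd (length h) \<and> \<not> terminal V E h
          \<longrightarrow> \<sigma> h \<in> E \<and> \<sigma> h \<notin> marked_edges h)"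

definition bob_wins :: "'v set \<Rightarrow> 'v set set \<Rightarrow> nat \<Rightarrow> bool" where
  "bob_wins V E s \<longleftrightarrow>
     (\<exists>\<sigma>. legal_bob_strategy V E \<sigma> \<and>
        (\<forall>h. legal_hist V E h \<and> consistent \<sigma> h \<and> terminal V E h
              \<longrightarrow> final_score_fin V h \<ge> enat s) \<and>
        (\<forall>f. (\<forall>n. legal_hist V E (map f [0..<n]) \<and> consistent \<sigma> (map f [0..<n]))
              \<longrightarrow> final_score_inf V f \<ge> enat s))"

definition col_ve :: "'v set \<Rightarrow> 'v set set \<Rightarrow> enat" where
  "col_ve V E = Sup {enat s | s. bob_wins V E s} + 1"

definition simple_graph :: "'v set \<Rightarrow> 'v set set \<Rightarrow> bool" where
  "simple_graph V E \<longleftrightarrow> (\<forall>e\<in>E. e \<subseteq> V \<and> card e = 2)"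

definition plane_embedding ::
    "'v set \<Rightarrow> 'v set set \<Rightarrow> ('v \<Rightarrow> complex) \<Rightarrow> ('v set \<Rightarrow> real \<Rightarrow> complex) \<Rightarrow> bool" where
  "plane_embedding V E pos arc_of \<longleftrightarrow>
     inj_on pos V \<and>
     (\<forall>e\<in>E. arc (arc_of e) \<and> {pathstart (arc_of e), pathfinish (arc_of e)} = pos ` e) \<and>
     (\<forall>e\<in>E. \<forall>e'\<in>E. e \<noteq> e' \<longrightarrow>
         path_image (arc_of e) \<inter> path_image (arc_of e') \<subseteq> pos ` (e \<inter> e')) \<and>
     (\<forall>e\<in>E. \<forall>v\<in>V. pos v \<in> path_image (arc_of e) \<longrightarrow> v \<in> e)"

definition drawing :: "'v set \<Rightarrow> 'v set set \<Rightarrow> ('v \<Rightarrow> complex) \<Rightarrow> ('v set \<Rightarrow> real \<Rightarrow> complex) \<Rightarrow> complex set" where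
  "drawing V E pos arc_of = pos ` V \<union> (\<Union>e\<in>E. path_image (arc_of e))"

definition faces :: "'v set \<Rightarrow> 'v set set \<Rightarrow> ('v \<Rightarrow> complex) \<Rightarrow> ('v set \<Rightarrow> real \<Rightarrow> complex) \<Rightarrow> complex set set" where
  "faces V E pos arc_of = components (- drawing V E pos arc_of)"

definition bounded_faces :: "'v set \<Rightarrow> 'v set set \<Rightarrow> ('v \<Rightarrow> complex) \<Rightarrow> ('v set \<Rightarrow> real \<Rightarrow> complex) \<Rightarrow> complex set set" where
  "bounded_faces V E pos arc_of = {F \<in> faces V E pos arc_of. bounded F}"

definition faces_adjacent ::
    "'v set set \<Rightarrow> ('v set \<Rightarrow> real \<Rightarrow> complex) \<Rightarrow> complex set \<Rightarrow> complex set \<Rightarrow> bool" where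
  "faces_adjacent E arc_of F1 F2 \<longleftrightarrow>
     (\<exists>e\<in>E. path_image (arc_of e) \<subseteq> frontier F1 \<inter> frontier F2)"

text \<open>(i): gray/white is a proper 2-colouring of the bounded faces
  (gray F true = gray, false = white).\<close>
definition proper_face_2coloring ::
    "'v set \<Rightarrow> 'v set set \<Rightarrow> ('v \<Rightarrow> complex) \<Rightarrow> ('v set \<Rightarrow> real \<Rightarrow> complex)
       \<Rightarrow> (complex set \<Rightarrow> bool) \<Rightarrow> bool" where
  "proper_face_2coloring V E pos arc_of gray \<longleftrightarrow>
     (\<forall>F1\<in>bounded_faces V E pos arc_of. \<forall>F2\<in>bounded_faces V E pos arc_of.
        F1 \<noteq> F2 \<and> faces_adjacent E arc_of F1 F2 \<longrightarrow> gray F1 \<noteq> gray F2)"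

definition gray_faces ::
    "'v set \<Rightarrow> 'v set set \<Rightarrow> ('v \<Rightarrow> complex) \<Rightarrow> ('v set \<Rightarrow> real \<Rightarrow> complex)
       \<Rightarrow> (complex set \<Rightarrow> bool) \<Rightarrow> complex set set" where
  "gray_faces V E pos arc_of gray = {F \<in> bounded_faces V E pos arc_of. gray F}"

definition triangle_face ::
    "'v set set \<Rightarrow> ('v set \<Rightarrow> real \<Rightarrow> complex) \<Rightarrow> complex set \<Rightarrow> 'v set \<Rightarrow> bool" where
  "triangle_face E arc_of F t \<longleftrightarrow>
     (\<exists>a b c. t = {a, b, c} \<and> a \<noteq> b \<and> b \<noteq> c \<and> a \<noteq> c \<and>
        {a, b} \<in> E \<and> {b, c} \<in> E \<and> {a, c} \<in> E \<and>
        frontier F = path_image (arc_of {a, b}) \<union> path_image (arc_of {b, c})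
                      \<union> path_image (arc_of {a, c}))"

definition gray_triangles ::
    "'v set \<Rightarrow> 'v set set \<Rightarrow> ('v \<Rightarrow> complex) \<Rightarrow> ('v set \<Rightarrow> real \<Rightarrow> complex)
       \<Rightarrow> (complex set \<Rightarrow> bool) \<Rightarrow> 'v set set" where
  "gray_triangles V E pos arc_of gray =
     {t. \<exists>F\<in>gray_faces V E pos arc_of gray. triangle_face E arc_of F t}"

end

theory Submission
  imports Defs
begin

(* Alice plays so as to keep every gray triangle t, with marked angle m, safe: a marked edge
   of t forces m to be marked, an unmarked corner a \<noteq> m lies on at most one marked edge
   of t, and the two edges of t at m are never both marked while both other corners are
   unmarked.  Bob's edge lies in exactly one gray triangle, and a safe triangle with one
   extra marked edge is made safe again by marking a single one of its corners.  In a safe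
   position an unmarked vertex x has no marked edge in a triangle whose marked angle is at x,
   and at most one in each of the at most two other triangles at x; so every vertex score is
   at most 2 after Alice's moves and at most 3 after Bob's.  Only simplicity of the graph and
   conditions (iii)-(v) on the gray triangles are used. *)

definition triangle_safe :: "'v set \<Rightarrow> 'v set set \<Rightarrow> 'v \<Rightarrow> 'v set \<Rightarrow> bool" where
  "triangle_safe MV ME m t \<longleftrightarrow>
     (\<forall>a\<in>t. \<forall>b\<in>t. m \<noteq> a \<and> m \<noteq> b \<and> a \<noteq> b \<longrightarrow>
        ({m, a} \<in> ME \<or> {a, b} \<in> ME \<longrightarrow> m \<in> MV) \<and>
        ({m, a} \<in> ME \<and> {a, b} \<in> ME \<longrightarrow> a \<in> MV) \<and>
        ({m, a} \<in> ME \<and> {m, b} \<in> ME \<longrightarrow> a \<in> MV \<or> b \<in> MV))"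

lemma triangle_safe_iff:
  assumes "m \<noteq> a" "m \<noteq> b" "a \<noteq> b"
  shows "triangle_safe MV ME m {m, a, b} \<longleftrightarrow>
     ({m, a} \<in> ME \<or> {m, b} \<in> ME \<or> {a, b} \<in> ME \<longrightarrow> m \<in> MV) \<and>
     ({m, a} \<in> ME \<and> {a, b} \<in> ME \<longrightarrow> a \<in> MV) \<and>
     ({m, b} \<in> ME \<and> {a, b} \<in> ME \<longrightarrow> b \<in> MV) \<and>
     ({m, a} \<in> ME \<and> {m, b} \<in> ME \<longrightarrow> a \<in> MV \<or> b \<in> MV)"
  using assms unfolding triangle_safe_def by (auto simp: insert_commute)

lemma triangle_safe_mono:
  "triangle_safe MV ME m t \<Longrightarrow> MV \<subseteq> MV' \<Longrightarrow> triangle_safe MV' ME m t"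
  unfolding triangle_safe_def by blast

lemma triangle_safe_insert_edge_outside:
  assumes "m \<in> t" "\<not> e \<subseteq> t"
  shows "triangle_safe MV (insert e ME) m t \<longleftrightarrow> triangle_safe MV ME m t"
proof -
  have "{x, y} \<in> insert e ME \<longleftrightarrow> {x, y} \<in> ME" if "x \<in> t" "y \<in> t" for x y
    using that assms(2) by auto
  then show ?thesis
    unfolding triangle_safe_def by (intro ball_cong refl) (simp only: assms(1))
qed

lemma triangle_safe_restore:
  assumes d: "m \<noteq> a" "m \<noteq> b" "a \<noteq> b"
    and safe: "triangle_safe MV ME m {m, a, b}"
    and e: "e \<in> {{m, a}, {m, b}, {a, b}}"
  shows "\<exists>v\<in>{m, a, b}. triangle_safe (insert v MV) (insert e ME) m {m, a, b}"
proof -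
  have "{m, a} \<noteq> {m, b}" "{m, a} \<noteq> {a, b}" "{m, b} \<noteq> {a, b}"
    using d by (auto simp: doubleton_eq_iff)
  note facts = this this[symmetric] d safe[unfolded triangle_safe_iff[OF d]]
  note unfold = triangle_safe_iff[OF d] insert_iff
  show ?thesis
  proof (cases "m \<in> MV")
    case False
    then show ?thesis using facts e unfolding unfold by (intro bexI[of _ m]) blast+
  next
    case True
    consider "e = {m, a}" | "e = {m, b}" | "e = {a, b}" using e by blast
    then show ?thesis
    proof cases
      case 1
      then show ?thesis using True facts unfolding unfold by (intro bexI[of _ a]) blast+
    next
      case 2
      then show ?thesis using True facts unfolding unfold by (intro bexI[of _ b]) blast+
    next
      case 3
      (* if a is unmarked and {m, a} is marked, safety gives b marked or {m, b} unmarked *)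
      let ?v = "if {m, a} \<in> ME \<and> a \<notin> MV then a else b"
      show ?thesis using 3 True facts unfolding unfold by (intro bexI[of _ ?v]) (auto split: if_splits)
    qed
  qed
qed

lemma marked_simps [simp]:
  "marked_vertices [] = {}" "marked_edges [] = {}"
  "marked_vertices (AMove v # h) = insert v (marked_vertices h)"
  "marked_vertices (BMove e # h) = marked_vertices h"
  "marked_edges (AMove v # h) = marked_edges h"
  "marked_edges (BMove e # h) = insert e (marked_edges h)"
  "marked_vertices (h @ h') = marked_vertices h \<union> marked_vertices h'"
  "marked_edges (h @ h') = marked_edges h \<union> marked_edges h'"
  unfolding marked_vertices_def marked_edges_def by auto

lemma finite_marked_edges: "finite (marked_edges h)"
proof -
  have "marked_edges h \<subseteq> (\<lambda>x. case x of BMove e \<Rightarrow> e | AMove v \<Rightarrow> {}) ` set h"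
    unfolding marked_edges_def by force
  then show ?thesis by (rule finite_subset) simp
qed

lemma legal_hist_snoc:
  "legal_hist V E (h @ [x]) \<longleftrightarrow> legal_hist V E h \<and>
     (even (length h) \<longrightarrow> (\<exists>v. x = AMove v \<and> v \<in> V \<and> v \<notin> marked_vertices h)) \<and>
     (odd (length h) \<longrightarrow> (\<exists>e. x = BMove e \<and> e \<in> E \<and> e \<notin> marked_edges h))"
  unfolding legal_hist_def by (simp add: nth_append All_less_Suc, blast)

lemma consistent_snoc:
  "consistent \<sigma> (h @ [x]) \<longleftrightarrow> consistent \<sigma> h \<and> (odd (length h) \<longrightarrow> x = BMove (\<sigma> h))"
  unfolding consistent_def by (simp add: nth_append All_less_Suc, blast)

lemma vertex_score_BMove_le: "vertex_score (h @ [BMove e]) v \<le> Suc (vertex_score h v)"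
proof (cases "v \<in> marked_vertices h")
  case False
  let ?M = "marked_edges h"
  have fin: "finite {e' \<in> ?M. v \<in> e'}" using finite_marked_edges[of h] by simp
  have "card {e' \<in> insert e ?M. v \<in> e'} \<le> card (insert e {e' \<in> ?M. v \<in> e'})"
    by (rule card_mono) (use fin in auto)
  also have "\<dots> \<le> Suc (card {e' \<in> ?M. v \<in> e'})"
    by (simp add: card_insert_if fin)
  finally show ?thesis using False by (simp add: vertex_score_def)
qed (simp add: vertex_score_def)

lemma score_le:
  assumes "\<forall>v\<in>V. vertex_score h v \<le> c"
  shows "score V h \<le> c"
proof (cases "V = {}")
  case False
  then show ?thesis unfolding score_def using assms by (intro cSUP_least) auto
qed (simp add: score_def)

primrec play :: "('v move list \<Rightarrow> 'v) \<Rightarrow> ('v move list \<Rightarrow> 'v set) \<Rightarrow> nat \<Rightarrow> 'v move list" where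
  "play \<alpha> \<sigma> 0 = []"
| "play \<alpha> \<sigma> (Suc n) =
     play \<alpha> \<sigma> n @ [if even n then AMove (\<alpha> (play \<alpha> \<sigma> n)) else BMove (\<sigma> (play \<alpha> \<sigma> n))]"

lemma length_play [simp]: "length (play \<alpha> \<sigma> n) = n"
  by (induction n) auto

lemma take_play: "k \<le> n \<Longrightarrow> take k (play \<alpha> \<sigma> n) = play \<alpha> \<sigma> k"
  by (induction n) (auto simp: le_Suc_eq)

lemma map_nth_play: "map (\<lambda>i. play \<alpha> \<sigma> (Suc i) ! i) [0..<n] = play \<alpha> \<sigma> n"
  by (induction n) (auto simp: nth_append)

lemma consistent_play: "consistent \<sigma> (play \<alpha> \<sigma> n)"
  by (induction n) (auto simp: consistent_snoc, simp add: consistent_def)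

lemma legal_play:
  assumes alice: "\<And>h. even (length h) \<Longrightarrow> \<not> terminal V E h \<Longrightarrow> \<alpha> h \<in> V \<and> \<alpha> h \<notin> marked_vertices h"
    and bob: "legal_bob_strategy V E \<sigma>"
    and running: "\<forall>k<n. \<not> terminal V E (play \<alpha> \<sigma> k)"
  shows "legal_hist V E (play \<alpha> \<sigma> n)"
  using running
proof (induction n)
  case 0
  then show ?case by (simp add: legal_hist_def)
next
  case (Suc n)
  then have legal: "legal_hist V E (play \<alpha> \<sigma> n)" and running: "\<not> terminal V E (play \<alpha> \<sigma> n)"
    by auto
  show ?case
  proof (cases "even n")
    case True
    then show ?thesis using legal running alice by (simp add: legal_hist_snoc)
  next
    case False
    then have "odd (length (play \<alpha> \<sigma> n))" by simp
    then have "\<sigma> (play \<alpha> \<sigma> n) \<in> E \<and> \<sigma> (play \<alpha> \<sigma> n) \<notin> marked_edges (play \<alpha> \<sigma> n)"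
      using bob legal running consistent_play unfolding legal_bob_strategy_def by blast
    then show ?thesis using legal False by (simp add: legal_hist_snoc)
  qed
qed

lemma final_score_fin_le:
  assumes "\<And>k. k \<le> length h \<Longrightarrow> score V (take k h) \<le> c"
  shows "final_score_fin V h \<le> enat c"
  unfolding final_score_fin_def using assms by (auto intro: SUP_least)

lemma final_score_inf_le:
  assumes "\<And>n. score V (map f [0..<n]) \<le> c"
  shows "final_score_inf V f \<le> enat c"
  unfolding final_score_inf_def using assms by (auto intro: SUP_least)

lemma bob_wins_le_if_alice_caps_score:
  assumes alice: "\<And>h. even (length h) \<Longrightarrow> \<not> terminal V E h \<Longrightarrow> \<alpha> h \<in> V \<and> \<alpha> h \<notin> marked_vertices h"
    and caps: "\<And>\<sigma> n. legal_bob_strategy V E \<sigma> \<Longrightarrow> \<forall>k<n. \<not> terminal V E (play \<alpha> \<sigma> k) \<Longrightarrow>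
                 score V (play \<alpha> \<sigma> n) \<le> c"
    and "bob_wins V E s"
  shows "s \<le> c"
proof -
  obtain \<sigma> where bob: "legal_bob_strategy V E \<sigma>"
    and fin: "\<forall>h. legal_hist V E h \<and> consistent \<sigma> h \<and> terminal V E h \<longrightarrow> final_score_fin V h \<ge> enat s"
    and inf: "\<forall>f. (\<forall>n. legal_hist V E (map f [0..<n]) \<and> consistent \<sigma> (map f [0..<n]))
              \<longrightarrow> final_score_inf V f \<ge> enat s"
    using assms(3) unfolding bob_wins_def by blast
  show ?thesis
  proof (cases "\<exists>n. terminal V E (play \<alpha> \<sigma> n)")
    case True
    define n0 where "n0 = (LEAST n. terminal V E (play \<alpha> \<sigma> n))"
    have terminal: "terminal V E (play \<alpha> \<sigma> n0)"
      unfolding n0_def using True by (rule LeastI_ex)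
    have running: "\<forall>k<n. \<not> terminal V E (play \<alpha> \<sigma> k)" if "n \<le> n0" for n
    proof (intro allI impI)
      fix k assume "k < n"
      with that have "k < n0" by simp
      then show "\<not> terminal V E (play \<alpha> \<sigma> k)" unfolding n0_def by (rule not_less_Least)
    qed
    have "legal_hist V E (play \<alpha> \<sigma> n0)"
      using legal_play[OF alice bob running] by simp
    then have "enat s \<le> final_score_fin V (play \<alpha> \<sigma> n0)"
      using fin consistent_play terminal by blast
    also have "\<dots> \<le> enat c"
      using caps[OF bob running] by (intro final_score_fin_le) (simp add: take_play)
    finally show ?thesis by simp
  next
    case False
    then have running: "\<forall>k<n. \<not> terminal V E (play \<alpha> \<sigma> k)" for n by blast
    define f where "f i = play \<alpha> \<sigma> (Suc i) ! i" for i
    have f: "map f [0..<n] = play \<alpha> \<sigma> n" for n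
      unfolding f_def by (rule map_nth_play)
    have "\<forall>n. legal_hist V E (map f [0..<n]) \<and> consistent \<sigma> (map f [0..<n])"
      unfolding f using legal_play[OF alice bob running] consistent_play by blast
    then have "enat s \<le> final_score_inf V f"
      using inf by blast
    also have "\<dots> \<le> enat c"
      using caps[OF bob running] by (intro final_score_inf_le) (simp add: f)
    finally show ?thesis by simp
  qed
qed

lemma col_ve_le:
  assumes "\<And>s. bob_wins V E s \<Longrightarrow> s \<le> c"
  shows "col_ve V E \<le> enat (Suc c)"
proof -
  have "Sup {enat s | s. bob_wins V E s} \<le> enat c"
    using assms by (auto intro: Sup_least)
  then show ?thesis
    unfolding col_ve_def eSuc_enat[symmetric] eSuc_plus_1 by (rule add_right_mono)
qed

locale marked_triangle_cover =
  fixes V :: "'v set" and E :: "'v set set" and GT :: "'v set set" and mark :: "'v set \<Rightarrow> 'v"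
  assumes simple: "simple_graph V E"
    and triangle: "\<And>t. t \<in> GT \<Longrightarrow> card t = 3 \<and> t \<subseteq> V"
    and unique_triangle: "\<And>e. e \<in> E \<Longrightarrow> \<exists>!t. t \<in> GT \<and> e \<subseteq> t"
    and mark_in: "\<And>t. t \<in> GT \<Longrightarrow> mark t \<in> t"
    and unmarked_angles: "\<And>x. x \<in> V \<Longrightarrow>
          finite {t \<in> GT. x \<in> t \<and> mark t \<noteq> x} \<and> card {t \<in> GT. x \<in> t \<and> mark t \<noteq> x} \<le> 2"
begin

lemma obtain_corners:
  assumes "t \<in> GT"
  obtains a b where "t = {mark t, a, b}" "mark t \<noteq> a" "mark t \<noteq> b" "a \<noteq> b"
proof -
  have "card (t - {mark t}) = 2"
    using triangle[OF assms] mark_in[OF assms] by (simp add: card_Diff_singleton)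
  then obtain a b where ab: "t - {mark t} = {a, b}" "a \<noteq> b"
    by (auto simp: card_2_iff)
  then have "t = {mark t, a, b}" using mark_in[OF assms] by blast
  with ab show ?thesis using that by blast
qed

lemma obtain_corners_at:
  assumes "t \<in> GT" "v \<in> t" "v \<noteq> mark t"
  obtains w where "t = {mark t, v, w}" "mark t \<noteq> w" "v \<noteq> w"
proof -
  obtain a b where t: "t = {mark t, a, b}" "mark t \<noteq> a" "mark t \<noteq> b" "a \<noteq> b"
    using obtain_corners[OF assms(1)] .
  then consider "v = a" | "v = b" using assms(2,3) by blast
  then show ?thesis
  proof cases
    case 1
    then show ?thesis using t that[of b] by blast
  next
    case 2
    then show ?thesis using t that[of a] by blast
  qed
qed

lemma edge_in_corner_pairs:
  assumes "e \<in> E" "e \<subseteq> {m, a, b}"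
  shows "e \<in> {{m, a}, {m, b}, {a, b}}"
proof -
  have "card e = 2" using simple assms(1) unfolding simple_graph_def by blast
  then obtain x y where "e = {x, y}" "x \<noteq> y" by (meson card_2_iff)
  with assms(2) show ?thesis by (auto simp: doubleton_eq_iff)
qed

definition triangle_of :: "'v set \<Rightarrow> 'v set" where
  "triangle_of e = (THE t. t \<in> GT \<and> e \<subseteq> t)"

lemma triangle_of: "e \<in> E \<Longrightarrow> triangle_of e \<in> GT \<and> e \<subseteq> triangle_of e"
  unfolding triangle_of_def by (rule theI') (rule unique_triangle)

lemma triangle_of_unique: "e \<in> E \<Longrightarrow> t \<in> GT \<Longrightarrow> e \<subseteq> t \<Longrightarrow> triangle_of e = t"
  unfolding triangle_of_def by (intro the1_equality unique_triangle) auto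

definition safe_position :: "'v set \<Rightarrow> 'v set set \<Rightarrow> bool" where
  "safe_position MV ME \<longleftrightarrow> ME \<subseteq> E \<and> (\<forall>t\<in>GT. triangle_safe MV ME (mark t) t)"

lemma safe_position_empty: "safe_position MV {}"
  by (simp add: safe_position_def triangle_safe_def)

lemma safe_position_step:
  assumes safe: "safe_position MV ME" and e: "e \<in> E" and u: "u \<in> V" "u \<notin> MV"
  shows "\<exists>w\<in>V. w \<notin> MV \<and> safe_position (insert w MV) (insert e ME)"
proof -
  define t0 where "t0 = triangle_of e"
  have t0: "t0 \<in> GT" "e \<subseteq> t0" using triangle_of[OF e] by (auto simp: t0_def)
  obtain a b where ab: "t0 = {mark t0, a, b}" "mark t0 \<noteq> a" "mark t0 \<noteq> b" "a \<noteq> b"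
    using obtain_corners[OF t0(1)] .
  have "triangle_safe MV ME (mark t0) {mark t0, a, b}"
    using safe t0(1) ab(1) by (metis safe_position_def)
  moreover have "e \<in> {{mark t0, a}, {mark t0, b}, {a, b}}"
    using edge_in_corner_pairs e t0(2) ab(1) by simp
  ultimately obtain v where v: "v \<in> t0" "triangle_safe (insert v MV) (insert e ME) (mark t0) t0"
    using triangle_safe_restore ab by metis
  define w where "w = (if v \<in> MV then u else v)"
  have w: "w \<in> V" "w \<notin> MV" "insert v MV \<subseteq> insert w MV"
    using u v(1) t0(1) triangle by (auto simp: w_def)
  have "triangle_safe (insert w MV) (insert e ME) (mark t) t" if t: "t \<in> GT" for t
  proof (cases "t = t0")
    case True
    then show ?thesis using triangle_safe_mono[OF v(2) w(3)] by simp
  next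
    case False
    then have outside: "\<not> e \<subseteq> t" using triangle_of_unique[OF e t] t0_def by blast
    have "triangle_safe MV ME (mark t) t" using safe t by (simp add: safe_position_def)
    then have "triangle_safe (insert w MV) ME (mark t) t" by (rule triangle_safe_mono) blast
    then show ?thesis using triangle_safe_insert_edge_outside[OF mark_in[OF t] outside] by simp
  qed
  then show ?thesis using w(1,2) safe e unfolding safe_position_def by blast
qed

lemma mark_of_triangle_of_marked:
  assumes "safe_position MV ME" "e \<in> ME"
  shows "mark (triangle_of e) \<in> MV"
proof -
  have e: "e \<in> E" using assms by (auto simp: safe_position_def)
  define t where "t = triangle_of e"
  have t: "t \<in> GT" "e \<subseteq> t" using triangle_of[OF e] by (auto simp: t_def)
  obtain a b where ab: "t = {mark t, a, b}" "mark t \<noteq> a" "mark t \<noteq> b" "a \<noteq> b"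
    using obtain_corners[OF t(1)] .
  have "triangle_safe MV ME (mark t) {mark t, a, b}"
    using assms(1) t(1) ab(1) by (metis safe_position_def)
  moreover have "e \<in> {{mark t, a}, {mark t, b}, {a, b}}"
    using edge_in_corner_pairs e t(2) ab(1) by simp
  ultimately have "mark t \<in> MV"
    using assms(2) unfolding triangle_safe_iff[OF ab(2-4)] by blast
  then show ?thesis by (simp add: t_def)
qed

text \<open>Each marked edge at v is charged to its gray triangle, whose marked angle is not at v;
  safety makes this charging injective.\<close>

lemma card_marked_edges_at_unmarked_le_2:
  assumes safe: "safe_position MV ME" and fin: "finite ME" and v: "v \<in> V" "v \<notin> MV"
  shows "card {e \<in> ME. v \<in> e} \<le> 2"
proof -
  let ?U = "{t \<in> GT. v \<in> t \<and> mark t \<noteq> v}"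
  have ME: "ME \<subseteq> E" using safe by (simp add: safe_position_def)
  have into: "triangle_of ` {e \<in> ME. v \<in> e} \<subseteq> ?U"
    using triangle_of ME mark_of_triangle_of_marked[OF safe] v(2) by fastforce
  have "inj_on triangle_of {e \<in> ME. v \<in> e}"
  proof (rule inj_onI)
    fix e1 e2 assume e1: "e1 \<in> {e \<in> ME. v \<in> e}" and e2: "e2 \<in> {e \<in> ME. v \<in> e}"
      and same: "triangle_of e1 = triangle_of e2"
    define t where "t = triangle_of e1"
    have t: "t \<in> ?U" using into e1 by (auto simp: t_def)
    then obtain w where w: "t = {mark t, v, w}" "mark t \<noteq> w" "v \<noteq> w"
      using obtain_corners_at by blast
    have mv: "mark t \<noteq> v" using t by simp
    have "triangle_safe MV ME (mark t) {mark t, v, w}"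
      using safe t w(1) by (metis (no_types, lifting) mem_Collect_eq safe_position_def)
    then have not_both: "\<not> ({mark t, v} \<in> ME \<and> {v, w} \<in> ME)"
      using v(2) unfolding triangle_safe_iff[OF mv w(2,3)] by blast
    have "e \<in> {{mark t, v}, {v, w}}" if "e \<in> {e1, e2}" for e
    proof -
      have "e \<in> E" "e \<subseteq> t" "v \<in> e"
        using that e1 e2 ME triangle_of same by (auto simp: t_def)
      then show ?thesis
        using edge_in_corner_pairs[of e "mark t" v w] w t by auto
    qed
    then show "e1 = e2" using not_both e1 e2 by auto
  qed
  then have "card {e \<in> ME. v \<in> e} \<le> card ?U"
    using into unmarked_angles[OF v(1)] by (blast intro: card_inj_on_le)
  also have "\<dots> \<le> 2" using unmarked_angles[OF v(1)] by blast
  finally show ?thesis .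
qed

definition safe_reply :: "'v move list \<Rightarrow> 'v \<Rightarrow> bool" where
  "safe_reply h v \<longleftrightarrow> v \<in> V \<and> v \<notin> marked_vertices h \<and>
     safe_position (insert v (marked_vertices h)) (marked_edges h)"

(* The fallback branch is never taken in a play (see safe_position_after_alice);
   it only keeps Alice's moves legal. *)
definition safe_move :: "'v move list \<Rightarrow> 'v" where
  "safe_move h = (if \<exists>v. safe_reply h v then SOME v. safe_reply h v
                  else SOME v. v \<in> V \<and> v \<notin> marked_vertices h)"

lemma safe_move_safe: "safe_reply h v \<Longrightarrow> safe_reply h (safe_move h)"
  unfolding safe_move_def by (auto intro: someI)

lemma safe_move_legal:
  assumes "even (length h)" "\<not> terminal V E h"
  shows "safe_move h \<in> V \<and> safe_move h \<notin> marked_vertices h"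
proof (cases "\<exists>v. safe_reply h v")
  case True
  then have "safe_reply h (safe_move h)" using safe_move_safe by blast
  then show ?thesis by (simp add: safe_reply_def)
next
  case False
  have "\<exists>v. v \<in> V \<and> v \<notin> marked_vertices h" using assms by (auto simp: terminal_def)
  then have "(SOME v. v \<in> V \<and> v \<notin> marked_vertices h) \<in> V \<and>
             (SOME v. v \<in> V \<and> v \<notin> marked_vertices h) \<notin> marked_vertices h"
    by (rule someI_ex)
  then show ?thesis using False by (simp add: safe_move_def)
qed

lemma safe_position_after_alice:
  assumes bob: "legal_bob_strategy V E \<sigma>"
    and running: "\<forall>k\<le>2 * m. \<not> terminal V E (play safe_move \<sigma> k)"
  shows "safe_position (marked_vertices (play safe_move \<sigma> (Suc (2 * m))))
                       (marked_edges (play safe_move \<sigma> (Suc (2 * m))))"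
  using running
proof (induction m)
  case 0
  then show ?case by (simp add: safe_position_empty)
next
  case (Suc m)
  let ?h = "play safe_move \<sigma> (Suc (2 * m))"
  let ?h' = "play safe_move \<sigma> (Suc (Suc (2 * m)))"
  have safe: "safe_position (marked_vertices ?h) (marked_edges ?h)"
    using Suc by simp
  have running: "\<not> terminal V E (play safe_move \<sigma> k)" if "k \<le> Suc (Suc (2 * m))" for k
    using Suc.prems that by simp
  have "\<forall>k<Suc (2 * m). \<not> terminal V E (play safe_move \<sigma> k)"
    by (intro allI impI running) simp
  then have "legal_hist V E ?h"
    using legal_play[OF safe_move_legal bob] by blast
  moreover have "\<not> terminal V E ?h" "odd (length ?h)"
    by (rule running, simp) simp
  ultimately have "\<sigma> ?h \<in> E"
    using bob consistent_play unfolding legal_bob_strategy_def by blast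
  have "\<not> terminal V E ?h'"
    by (rule running) simp
  then obtain u where u: "u \<in> V" "u \<notin> marked_vertices ?h'"
    unfolding terminal_def by auto
  have h': "marked_vertices ?h' = marked_vertices ?h"
    "marked_edges ?h' = insert (\<sigma> ?h) (marked_edges ?h)"
    by simp_all
  have "\<exists>w. safe_reply ?h' w"
    using safe_position_step[OF safe \<open>\<sigma> ?h \<in> E\<close> u(1)] u(2) unfolding h' safe_reply_def by blast
  then have "safe_position (insert (safe_move ?h') (marked_vertices ?h')) (marked_edges ?h')"
    using safe_move_safe unfolding safe_reply_def by blast
  moreover have "play safe_move \<sigma> (Suc (2 * Suc m)) = ?h' @ [AMove (safe_move ?h')]"
    by simp
  ultimately show ?case by (simp only: marked_simps Un_empty_right Un_insert_right)
qed

lemma vertex_score_after_alice_le_2: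
  assumes bob: "legal_bob_strategy V E \<sigma>"
    and running: "\<forall>k\<le>2 * m. \<not> terminal V E (play safe_move \<sigma> k)" and v: "v \<in> V"
  shows "vertex_score (play safe_move \<sigma> (Suc (2 * m))) v \<le> 2"
proof (cases "v \<in> marked_vertices (play safe_move \<sigma> (Suc (2 * m)))")
  case False
  then show ?thesis
    using card_marked_edges_at_unmarked_le_2[OF safe_position_after_alice[OF bob running]
        finite_marked_edges v False]
    by (simp add: vertex_score_def)
qed (simp add: vertex_score_def)

lemma vertex_score_play_le_3:
  assumes bob: "legal_bob_strategy V E \<sigma>"
    and running: "\<forall>k<n. \<not> terminal V E (play safe_move \<sigma> k)" and v: "v \<in> V"
  shows "vertex_score (play safe_move \<sigma> n) v \<le> 3"
proof -
  have after_alice: "vertex_score (play safe_move \<sigma> (Suc (2 * m))) v \<le> 2"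
    if "Suc (2 * m) \<le> n" for m
    using vertex_score_after_alice_le_2[OF bob _ v] running that by simp
  have "\<exists>m. n = 0 \<or> n = Suc (2 * m) \<or> n = Suc (Suc (2 * m))" by presburger
  then obtain m where "n = 0 \<or> n = Suc (2 * m) \<or> n = Suc (Suc (2 * m))" ..
  then show ?thesis
  proof (elim disjE)
    assume "n = 0"
    then show ?thesis by (simp add: vertex_score_def)
  next
    assume "n = Suc (2 * m)"
    then show ?thesis using after_alice[of m] by simp
  next
    assume n: "n = Suc (Suc (2 * m))"
    then have "play safe_move \<sigma> n =
        play safe_move \<sigma> (Suc (2 * m)) @ [BMove (\<sigma> (play safe_move \<sigma> (Suc (2 * m))))]"
      by simp
    then have "vertex_score (play safe_move \<sigma> n) v \<le>
               Suc (vertex_score (play safe_move \<sigma> (Suc (2 * m))) v)"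
      by (simp only: vertex_score_BMove_le)
    moreover have "vertex_score (play safe_move \<sigma> (Suc (2 * m))) v \<le> 2"
      using after_alice n by simp
    ultimately show ?thesis by linarith
  qed
qed

lemma bob_wins_le_3:
  assumes "bob_wins V E s"
  shows "s \<le> 3"
proof (rule bob_wins_le_if_alice_caps_score[OF safe_move_legal _ assms])
  fix \<sigma> n
  assume "legal_bob_strategy V E \<sigma>" "\<forall>k<n. \<not> terminal V E (play safe_move \<sigma> k)"
  then have "\<forall>v\<in>V. vertex_score (play safe_move \<sigma> n) v \<le> 3"
    using vertex_score_play_le_3 by blast
  then show "score V (play safe_move \<sigma> n) \<le> 3" by (rule score_le)
qed

end

lemma triangle_face_card_subset:
  assumes "simple_graph V E" "triangle_face E arc_of F t"
  shows "card t = 3 \<and> t \<subseteq> V"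
proof -
  obtain a b c where "t = {a, b, c}" "a \<noteq> b" "b \<noteq> c" "a \<noteq> c" "{a, b} \<in> E" "{b, c} \<in> E"
    using assms(2) unfolding triangle_face_def by blast
  then show ?thesis using assms(1) by (auto simp: simple_graph_def)
qed

theorem theorem3p1:
  fixes V :: "'v set" and E :: "'v set set"
    and pos :: "'v \<Rightarrow> complex" and arc_of :: "'v set \<Rightarrow> real \<Rightarrow> complex"
    and gray :: "complex set \<Rightarrow> bool" and mark :: "'v set \<Rightarrow> 'v"
  assumes graph: "simple_graph V E"
    and embedded: "plane_embedding V E pos arc_of"
    and i: "proper_face_2coloring V E pos arc_of gray"
    and ii: "\<forall>F\<in>gray_faces V E pos arc_of gray. \<exists>t. triangle_face E arc_of F t"
    and iii: "\<forall>e\<in>E. \<exists>!t. t \<in> gray_triangles V E pos arc_of gray \<and> e \<subseteq> t"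
    and iv: "\<forall>t\<in>gray_triangles V E pos arc_of gray. mark t \<in> t"
    and v: "\<forall>x\<in>V. finite {t \<in> gray_triangles V E pos arc_of gray. x \<in> t \<and> mark t \<noteq> x}
                  \<and> card {t \<in> gray_triangles V E pos arc_of gray. x \<in> t \<and> mark t \<noteq> x} \<le> 2"
  shows "col_ve V E \<le> 4"
proof -
  have gray_triangle: "card t = 3 \<and> t \<subseteq> V" if "t \<in> gray_triangles V E pos arc_of gray" for t
    using that triangle_face_card_subset[OF graph] unfolding gray_triangles_def by blast
  interpret marked_triangle_cover V E "gray_triangles V E pos arc_of gray" mark
  proof unfold_locales
    show "simple_graph V E" by (rule graph)
  qed (simp_all add: gray_triangle iii iv v)
  have "col_ve V E \<le> enat (Suc 3)"
    by (rule col_ve_le[OF bob_wins_le_3])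
  then show ?thesis by (simp add: numeral_eq_enat)
qed

end
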